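(* Fix an integer $\delta>0$. There is $n(\delta)$ such that for all $n\ge n(\delta)$, among all $n$-vertex graphs with minimum degree at least $\delta$, the unique graph with the most independent sets is $K_{\delta,n-\delta}$.
   Context: Graphs are simple, loopless and finite; the number of independent sets includes the empty set. $K_{a,b}$ is the complete bipartite graph with $a$ vertices in one part and $b$ in the other. *)

theory Defs
  imports Main
begin

definition simple_graph :: "'a set \<Rightarrow> 'a set set \<Rightarrow> bool" where
  "simple_graph V E \<longleftrightarrow> finite V \<and> (\<forall>e\<in>E. e \<subseteq> V \<and> card e = 2)"

definition degree :: "'a set set \<Rightarrow> 'a \<Rightarrow> nat" where
  "degree E v = card {u. {u, v} \<in> E}"

definition min_degree_ge :: "'a set \<Rightarrow> 'a set set \<Rightarrow> nat \<Rightarrow> bool" where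
  "min_degree_ge V E d \<longleftrightarrow> (\<forall>v\<in>V. d \<le> degree E v)"

definition independent_set :: "'a set \<Rightarrow> 'a set set \<Rightarrow> 'a set \<Rightarrow> bool" where
  "independent_set V E I \<longleftrightarrow> I \<subseteq> V \<and> (\<forall>e\<in>E. \<not> e \<subseteq> I)"

text \<open>Number of independent sets (the empty set included).\<close>
definition num_indep_sets :: "'a set \<Rightarrow> 'a set set \<Rightarrow> nat" where
  "num_indep_sets V E = card {I. independent_set V E I}"

definition is_complete_bipartite :: "'a set \<Rightarrow> 'a set set \<Rightarrow> nat \<Rightarrow> nat \<Rightarrow> bool" where
  "is_complete_bipartite V E a b \<longleftrightarrow>
     (\<exists>A B. A \<inter> B = {} \<and> A \<union> B = V \<and> card A = a \<and> card B = b \<and>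
            E = {{x, y} | x y. x \<in> A \<and> y \<in> B})"

end

theory Submission
  imports Defs
begin

text \<open>Let S be a maximum independent set, \<alpha> = |S|, T = V - S and t = |T|.
  An independent set I is determined by its trace J = I \<inter> T, an independent subset of T,
  together with a subset of S - N(J); as (S - N(J)) \<union> J is again independent,
  |S - N(J)| \<le> \<alpha> - |J|. Hence i(G) is at most the sum of 2^|S - N(J)| over all traces J,
  which is at most 2^(\<alpha> - t) 3^t, whereas K(\<delta>, n - \<delta>) has 2^(n - \<delta>) + 2^\<delta> - 1
  independent sets; minimum degree \<delta> forces t \<ge> \<delta>.
  If t = \<delta>, every vertex of S is adjacent to all of T, and a graph other than K(\<delta>, n - \<delta>)
  has an edge inside T, which removes at least one trace.
  If t \<ge> 3\<delta>, the bound 2^(\<alpha> - t) 3^t is already below 2^(n - \<delta>).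
  Otherwise t is small while \<alpha> is large, so the vertices of T with at most t + 1
  neighbours in S cannot dominate S: some vertex of S has all its \<ge> \<delta> neighbours among
  the remaining vertices of T. A trace meeting those loses a factor 2^(t + 2), and at most
  2^(t - \<delta>) traces avoid them.\<close>

definition nbhd :: "'a set set \<Rightarrow> 'a set \<Rightarrow> 'a set" where
  "nbhd E J = {y. \<exists>x\<in>J. {x, y} \<in> E}"

lemma independent_set_subset:
  "independent_set V E I \<Longrightarrow> J \<subseteq> I \<Longrightarrow> independent_set V E J"
  unfolding independent_set_def by (meson subset_trans)

lemma simple_graph_edgeE:
  assumes "simple_graph V E" "e \<in> E"
  obtains a b where "a \<noteq> b" "e = {a, b}" "a \<in> V" "b \<in> V"
proof -
  have "card e = 2" "e \<subseteq> V" using assms by (auto simp: simple_graph_def)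
  then show ?thesis using that by (auto simp: card_2_iff)
qed

lemma independent_set_iff:
  assumes "simple_graph V E"
  shows "independent_set V E I \<longleftrightarrow> I \<subseteq> V \<and> (\<forall>a\<in>I. \<forall>b\<in>I. {a, b} \<notin> E)"
proof
  assume "I \<subseteq> V \<and> (\<forall>a\<in>I. \<forall>b\<in>I. {a, b} \<notin> E)"
  moreover have "\<not> e \<subseteq> I" if "e \<in> E" "\<forall>a\<in>I. \<forall>b\<in>I. {a, b} \<notin> E" for e
    using simple_graph_edgeE[OF assms \<open>e \<in> E\<close>] that by (metis insert_subset)
  ultimately show "independent_set V E I" by (auto simp: independent_set_def)
qed (auto simp: independent_set_def)

lemma independent_set_singleton:
  "simple_graph V E \<Longrightarrow> v \<in> V \<Longrightarrow> independent_set V E {v}"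
  by (auto simp: independent_set_iff simple_graph_def)

lemma independent_set_empty: "simple_graph V E \<Longrightarrow> independent_set V E {}"
  by (auto simp: independent_set_def simple_graph_def)

lemma finite_independent_sets: "finite V \<Longrightarrow> finite {I. independent_set V E I}"
  by (rule finite_subset[of _ "Pow V"]) (auto simp: independent_set_def)

lemma min_degree_geD:
  "min_degree_ge V E d \<Longrightarrow> v \<in> V \<Longrightarrow> d \<le> card {u. {u, v} \<in> E}"
  by (simp add: min_degree_ge_def degree_def)

lemma maximum_independent_set_exists:
  assumes "simple_graph V E"
  obtains S
  where "independent_set V E S" "\<And>I. independent_set V E I \<Longrightarrow> card I \<le> card S"
proof -
  let ?\<I> = "{I. independent_set V E I}"
  have fin: "finite (card ` ?\<I>)"
    using assms by (simp add: simple_graph_def finite_independent_sets)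
  have "{} \<in> ?\<I>"
    using assms independent_set_empty by simp
  with fin have "Max (card ` ?\<I>) \<in> card ` ?\<I>" by (intro Max_in) auto
  then obtain S where "S \<in> ?\<I>" "card S = Max (card ` ?\<I>)" by auto
  then show ?thesis using that Max_ge[OF fin] by simp
qed

lemma num_indep_sets_complete_bipartite_ge:
  assumes "finite V" "is_complete_bipartite V H a b"
  shows "2 ^ b + 2 ^ a - 1 \<le> num_indep_sets V H"
proof -
  obtain A B where AB: "A \<inter> B = {}" "A \<union> B = V" "card A = a" "card B = b"
    and H: "H = {{x, y} | x y. x \<in> A \<and> y \<in> B}"
    using assms(2) unfolding is_complete_bipartite_def by blast
  have fin: "finite A" "finite B" using AB assms(1) by auto
  have "independent_set V H I" if "I \<subseteq> A \<or> I \<subseteq> B" for I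
    unfolding independent_set_def H using that AB by blast
  then have "Pow B \<union> (Pow A - {{}}) \<subseteq> {I. independent_set V H I}" by blast
  then have "card (Pow B \<union> (Pow A - {{}})) \<le> num_indep_sets V H"
    unfolding num_indep_sets_def by (rule card_mono[OF finite_independent_sets[OF assms(1)]])
  moreover have "card (Pow B \<union> (Pow A - {{}})) = 2 ^ b + (2 ^ a - 1)"
    using fin AB by (subst card_Un_disjoint) (auto simp: card_Pow)
  ultimately show ?thesis by simp
qed

lemma complete_bipartite_exists:
  assumes "0 < d" "2 * d \<le> n"
  shows "\<exists>E. simple_graph {0..<n} E \<and> min_degree_ge {0..<n} E d \<and>
          is_complete_bipartite {0..<n} E d (n - d)"
proof -
  define E where "E = {{x, y} | x y. x \<in> {0..<d} \<and> y \<in> {d..<n}}"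
  have edge: "{u, v} \<in> E \<longleftrightarrow> (u < d \<and> d \<le> v \<and> v < n) \<or> (v < d \<and> d \<le> u \<and> u < n)"
    for u v
    unfolding E_def by (auto simp: doubleton_eq_iff)
  have "{u. {u, v} \<in> E} = (if v < d then {d..<n} else {0..<d})" if "v < n" for v
    using that unfolding edge by auto
  then have "min_degree_ge {0..<n} E d"
    using assms by (auto simp: min_degree_ge_def degree_def)
  moreover have "simple_graph {0..<n} E" by (auto simp: simple_graph_def E_def)
  moreover have "is_complete_bipartite {0..<n} E d (n - d)"
    unfolding is_complete_bipartite_def E_def
    by (rule exI[of _ "{0..<d}"], rule exI[of _ "{d..<n}"]) (use assms in auto)
  ultimately show ?thesis by blast
qed

lemma complete_bipartite_if_no_edge_in_part:
  assumes "simple_graph V E" "S \<subseteq> V"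
    and independent: "\<forall>a\<in>S. \<forall>b\<in>S. {a, b} \<notin> E"
    and no_edge: "\<forall>a\<in>V - S. \<forall>b\<in>V - S. {a, b} \<notin> E"
    and complete: "\<forall>s\<in>S. \<forall>x\<in>V - S. {x, s} \<in> E"
  shows "is_complete_bipartite V E (card (V - S)) (card S)"
proof -
  have "E = {{x, y} | x y. x \<in> V - S \<and> y \<in> S}"
  proof
    show "E \<subseteq> {{x, y} | x y. x \<in> V - S \<and> y \<in> S}"
    proof
      fix e assume "e \<in> E"
      then obtain a b where e: "e = {a, b}" "a \<in> V" "b \<in> V"
        using simple_graph_edgeE[OF assms(1)] by metis
      then have "(a \<in> V - S \<and> b \<in> S) \<or> (b \<in> V - S \<and> a \<in> S)"
        using \<open>e \<in> E\<close> independent no_edge by blast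
      then show "e \<in> {{x, y} | x y. x \<in> V - S \<and> y \<in> S}"
        using e by (auto simp: insert_commute)
    qed
  qed (use complete in blast)
  moreover have "(V - S) \<inter> S = {}" "(V - S) \<union> S = V" using assms(2) by auto
  ultimately show ?thesis unfolding is_complete_bipartite_def by blast
qed

subsection \<open>Counting independent sets through a maximum independent set\<close>

lemma three_pow_mul_two_pow_lt_four_pow:
  assumes "0 < d" "3 * d \<le> t"
  shows "3 ^ t * 2 ^ d < (4::nat) ^ t"
proof -
  define r where "r = t - 3 * d"
  have t: "t = r + 3 * d" using assms(2) by (simp add: r_def)
  have "(3::nat) ^ t * 2 ^ d = 3 ^ r * (27 ^ d * 2 ^ d)"
    by (simp add: t power_add power_mult)
  also have "\<dots> = 3 ^ r * 54 ^ d"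
    by (simp flip: power_mult_distrib)
  also have "\<dots> < 4 ^ r * 64 ^ d"
    using assms(1) by (intro mult_le_less_imp_less power_mono power_strict_mono) auto
  also have "\<dots> = 4 ^ t" by (simp add: t power_add power_mult)
  finally show ?thesis .
qed

lemma sum_Pow_two_pow_card_diff:
  assumes "finite T"
  shows "(\<Sum>J\<in>Pow T. (2::nat) ^ (card T - card J)) = 3 ^ card T"
proof -
  have "(3::nat) ^ card T = (\<Sum>J\<in>Pow T. 2 ^ card (T - J))"
    using prod_add[OF assms, of "\<lambda>_. 1" "\<lambda>_. 2::nat"] by (simp add: numeral_3_eq_3)
  also have "\<dots> = (\<Sum>J\<in>Pow T. 2 ^ (card T - card J))"
    using assms by (intro sum.cong refl) (auto simp: card_Diff_subset finite_subset)
  finally show ?thesis ..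
qed

locale max_indep_set =
  fixes V :: "'a set" and E :: "'a set set" and S :: "'a set"
  assumes simple: "simple_graph V E"
    and indep: "independent_set V E S"
    and maximum: "\<And>I. independent_set V E I \<Longrightarrow> card I \<le> card S"
begin

abbreviation T :: "'a set" where
  "T \<equiv> V - S"

abbreviation unblocked :: "'a set \<Rightarrow> 'a set" where
  "unblocked J \<equiv> S - nbhd E J"

definition traces :: "'a set set" where
  "traces = {J. J \<subseteq> T \<and> independent_set V E J}"

definition trace_sum :: nat where
  "trace_sum = (\<Sum>J\<in>traces. 2 ^ card (unblocked J))"

lemma finite_V: "finite V"
  using simple by (simp add: simple_graph_def)

lemma S_subset: "S \<subseteq> V"
  using indep by (simp add: independent_set_def)

lemma finite_S: "finite S"
  using S_subset finite_V finite_subset by blast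

lemma S_independent: "\<forall>a\<in>S. \<forall>b\<in>S. {a, b} \<notin> E"
  using indep independent_set_iff[OF simple] by blast

lemma card_V: "card V = card S + card T"
  using card_Diff_subset[OF finite_S S_subset] card_mono[OF finite_V S_subset] by simp

lemma traces_subset_Pow: "traces \<subseteq> Pow T"
  by (auto simp: traces_def)

lemma finite_traces: "finite traces"
  using traces_subset_Pow finite_V by (meson finite_Diff finite_Pow_iff finite_subset)

lemma empty_in_traces: "{} \<in> traces"
  using independent_set_empty[OF simple] by (simp add: traces_def)

lemma S_nonempty: "V \<noteq> {} \<Longrightarrow> S \<noteq> {}"
  using maximum independent_set_singleton[OF simple] finite_S by fastforce

lemma neighbours_subset: "s \<in> S \<Longrightarrow> {u. {u, s} \<in> E} \<subseteq> T"
  using S_independent simple by (auto simp: simple_graph_def)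

lemma min_degree_le_card_T:
  assumes "min_degree_ge V E d" "V \<noteq> {}"
  shows "d \<le> card T"
proof -
  obtain s where "s \<in> S" using S_nonempty[OF assms(2)] by blast
  then have "d \<le> card {u. {u, s} \<in> E}"
    using min_degree_geD[OF assms(1)] S_subset by blast
  also have "\<dots> \<le> card T"
    using neighbours_subset[OF \<open>s \<in> S\<close>] finite_V by (intro card_mono) auto
  finally show ?thesis .
qed

lemma exchange_independent:
  assumes "J \<in> traces"
  shows "independent_set V E (unblocked J \<union> J)"
proof -
  have "\<forall>a\<in>J. \<forall>b\<in>J. {a, b} \<notin> E" "J \<subseteq> V"
    using assms independent_set_iff[OF simple] by (auto simp: traces_def)
  moreover have "{a, b} \<notin> E \<and> {b, a} \<notin> E" if "a \<in> J" "b \<in> unblocked J" for a b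
    using that by (auto simp: nbhd_def insert_commute)
  ultimately show ?thesis
    using S_independent S_subset by (auto simp: independent_set_iff[OF simple])
qed

lemma card_unblocked_add_card_le:
  assumes "J \<in> traces"
  shows "card (unblocked J) + card J \<le> card S"
proof -
  have "card (unblocked J \<union> J) = card (unblocked J) + card J"
    using assms finite_S finite_V by (intro card_Un_disjoint) (auto simp: traces_def finite_subset)
  then show ?thesis using maximum[OF exchange_independent[OF assms]] by simp
qed

lemma num_indep_sets_le_trace_sum: "num_indep_sets V E \<le> trace_sum"
proof -
  let ?extend = "\<lambda>J. (\<union>) J ` Pow (unblocked J)"
  have "{I. independent_set V E I} \<subseteq> (\<Union>J\<in>traces. ?extend J)"
  proof
    fix I assume "I \<in> {I. independent_set V E I}"
    then have I: "independent_set V E I" by simp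
    then have "I \<inter> T \<in> traces"
      by (auto simp: traces_def intro: independent_set_subset)
    moreover have "I \<inter> S \<subseteq> unblocked (I \<inter> T)"
      using I by (auto simp: nbhd_def independent_set_iff[OF simple])
    moreover have "I = I \<inter> T \<union> I \<inter> S"
      using I by (auto simp: independent_set_def)
    ultimately show "I \<in> (\<Union>J\<in>traces. ?extend J)" by blast
  qed
  then have "num_indep_sets V E \<le> card (\<Union>J\<in>traces. ?extend J)"
    unfolding num_indep_sets_def using finite_traces finite_S
    by (intro card_mono) auto
  also have "\<dots> \<le> (\<Sum>J\<in>traces. card (?extend J))"
    by (rule card_UN_le[OF finite_traces])
  also have "\<dots> \<le> trace_sum"
    unfolding trace_sum_def using finite_S
    by (intro sum_mono) (metis card_Pow card_image_le finite_Diff finite_Pow_iff)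
  finally show ?thesis .
qed

lemma trace_sum_le_three_pow:
  "2 ^ card T * trace_sum \<le> 2 ^ card S * 3 ^ card T"
proof -
  have "2 ^ card T * 2 ^ card (unblocked J) \<le> (2::nat) ^ card S * 2 ^ (card T - card J)"
    if "J \<in> traces" for J
  proof -
    have "card J \<le> card T"
      using that traces_subset_Pow finite_V by (intro card_mono) auto
    then show ?thesis
      using card_unblocked_add_card_le[OF that] by (simp flip: power_add)
  qed
  then have "2 ^ card T * trace_sum \<le> (\<Sum>J\<in>traces. 2 ^ card S * 2 ^ (card T - card J))"
    unfolding trace_sum_def sum_distrib_left by (rule sum_mono)
  also have "\<dots> \<le> (\<Sum>J\<in>Pow T. 2 ^ card S * 2 ^ (card T - card J))"
    using traces_subset_Pow finite_V by (intro sum_mono2) auto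
  also have "\<dots> = 2 ^ card S * 3 ^ card T"
    using sum_Pow_two_pow_card_diff[of T] finite_V by (simp flip: sum_distrib_left)
  finally show ?thesis .
qed

lemma edge_if_card_T_eq:
  assumes "min_degree_ge V E d" "card T = d" "s \<in> S" "x \<in> T"
  shows "{x, s} \<in> E"
proof -
  have "d \<le> card {u. {u, s} \<in> E}"
    using min_degree_geD[OF assms(1)] assms(3) S_subset by blast
  then have "{u. {u, s} \<in> E} = T"
    using neighbours_subset[OF assms(3)] finite_V assms(2) by (metis card_seteq finite_Diff)
  then show ?thesis using assms(4) by blast
qed

lemma trace_sum_lt_if_card_T_eq:
  assumes "min_degree_ge V E d" "0 < d" "card T = d"
    and "\<not> is_complete_bipartite V E d (card S)"
  shows "trace_sum < 2 ^ card S + 2 ^ d - 1"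
proof -
  have complete: "\<forall>s\<in>S. \<forall>x\<in>T. {x, s} \<in> E"
    using edge_if_card_T_eq[OF assms(1,3)] by blast
  then obtain a b where ab: "a \<in> T" "b \<in> T" "{a, b} \<in> E"
    using complete_bipartite_if_no_edge_in_part[OF simple S_subset S_independent] assms(3,4)
    by blast
  have unblocked_empty: "unblocked J = {}" if J: "J \<in> traces - {{}}" for J
  proof -
    obtain x where "x \<in> J" using J by blast
    then show ?thesis using J complete by (auto simp: traces_def nbhd_def)
  qed
  have "T \<notin> traces"
    using ab by (auto simp: traces_def independent_set_iff[OF simple])
  then have "traces - {{}} \<subseteq> Pow T - {{}, T}"
    using traces_subset_Pow by blast
  moreover have "card (Pow T - {{}, T}) = 2 ^ d - 2"
  proof -
    have "T \<noteq> {}" using assms(2,3) card_gt_0_iff by blast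
    then show ?thesis using finite_V assms(3) by (subst card_Diff_subset) (auto simp: card_Pow)
  qed
  ultimately have "card (traces - {{}}) \<le> 2 ^ d - 2"
    using finite_V by (metis card_mono finite_Diff finite_Pow_iff)
  moreover have "trace_sum = 2 ^ card S + card (traces - {{}})"
  proof -
    have "trace_sum = 2 ^ card (unblocked {}) + (\<Sum>J\<in>traces - {{}}. 2 ^ card (unblocked J))"
      unfolding trace_sum_def by (rule sum.remove[OF finite_traces empty_in_traces])
    also have "(\<Sum>J\<in>traces - {{}}. 2 ^ card (unblocked J)) = (\<Sum>J\<in>traces - {{}}. 1 :: nat)"
      by (intro sum.cong refl) (metis card.empty power_0 unblocked_empty)
    finally show ?thesis by (simp add: nbhd_def)
  qed
  moreover have "(2::nat) \<le> 2 ^ d" using assms(2) by (simp add: self_le_power)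
  ultimately show ?thesis by linarith
qed

lemma trace_sum_lt_if_card_T_large:
  assumes "0 < d" "3 * d \<le> card T"
  shows "trace_sum < 2 ^ (card V - d)"
proof -
  have "2 ^ card T * trace_sum * 2 ^ d \<le> 2 ^ card S * (3 ^ card T * 2 ^ d)"
    using trace_sum_le_three_pow by simp
  also have "\<dots> < 2 ^ card S * 4 ^ card T"
    using three_pow_mul_two_pow_lt_four_pow[OF assms] by simp
  also have "\<dots> = 2 ^ (card S + 2 * card T)"
    by (simp add: power_add power_mult)
  also have "card S + 2 * card T = card T + (card V - d) + d"
    using assms card_V by linarith
  also have "(2::nat) ^ \<dots> = 2 ^ card T * 2 ^ (card V - d) * 2 ^ d"
    by (simp add: power_add)
  finally show ?thesis by simp
qed

definition low :: "'a set" where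
  "low = {x \<in> T. card (S \<inter> nbhd E {x}) \<le> card T + 1}"

lemma card_low_le:
  assumes "min_degree_ge V E d" "card T * (card T + 1) < card S"
  shows "card low \<le> card T - d"
proof -
  let ?covered = "\<Union>x\<in>low. S \<inter> nbhd E {x}"
  have low: "low \<subseteq> T" "finite low"
    using finite_V by (auto simp: low_def)
  have "card ?covered \<le> (\<Sum>x\<in>low. card (S \<inter> nbhd E {x}))"
    by (rule card_UN_le[OF low(2)])
  also have "\<dots> \<le> card low * (card T + 1)"
    by (rule order_trans[OF sum_bounded_above[of low _ "card T + 1"]]) (auto simp: low_def)
  also have "\<dots> \<le> card T * (card T + 1)"
    using low finite_V by (intro mult_le_mono1 card_mono) auto
  finally have "card ?covered < card S" using assms(2) by linarith
  moreover have "?covered \<subseteq> S" by blast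
  ultimately have "\<not> S \<subseteq> ?covered" by (metis less_irrefl subset_antisym)
  then obtain s where s: "s \<in> S" "s \<notin> ?covered" by blast
  have "d \<le> card {u. {u, s} \<in> E}"
    using min_degree_geD[OF assms(1)] s(1) S_subset by blast
  also have "\<dots> \<le> card (T - low)"
  proof (rule card_mono)
    show "finite (T - low)" using finite_V by blast
    show "{u. {u, s} \<in> E} \<subseteq> T - low"
      using neighbours_subset[OF s(1)] s by (auto simp: nbhd_def)
  qed
  also have "\<dots> = card T - card low"
    using low by (simp add: card_Diff_subset)
  finally have "d \<le> card T - card low" .
  moreover have "card low \<le> card T" using low finite_V by (intro card_mono) auto
  ultimately show ?thesis by linarith
qed

lemma card_unblocked_antimono:
  "J \<subseteq> K \<Longrightarrow> card (unblocked K) \<le> card (unblocked J)"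
  using finite_S by (intro card_mono) (auto simp: nbhd_def)

lemma trace_sum_high_le:
  assumes "card T + 2 \<le> card S"
  shows "4 * (\<Sum>J\<in>traces - Pow low. 2 ^ card (unblocked J)) \<le> (2::nat) ^ card S"
proof -
  have weight_le: "(2::nat) ^ card (unblocked J) \<le> 2 ^ (card S - (card T + 2))"
    if J: "J \<in> traces - Pow low" for J
  proof -
    obtain x where x: "x \<in> J" "x \<notin> low" using J by blast
    then have "x \<in> T" using J by (auto simp: traces_def)
    then have "card T + 2 \<le> card (S \<inter> nbhd E {x})" using x(2) by (auto simp: low_def)
    moreover have "card (unblocked {x}) = card S - card (S \<inter> nbhd E {x})"
      using finite_S by (simp add: card_Diff_subset_Int)
    moreover have "card (unblocked J) \<le> card (unblocked {x})"
      using x(1) by (intro card_unblocked_antimono) auto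
    ultimately have "card (unblocked J) \<le> card S - (card T + 2)" by linarith
    then show ?thesis by (rule power_increasing) simp
  qed
  have "(\<Sum>J\<in>traces - Pow low. 2 ^ card (unblocked J))
      \<le> card (traces - Pow low) * (2::nat) ^ (card S - (card T + 2))"
    using sum_bounded_above[where A = "traces - Pow low", OF weight_le] by simp
  also have "\<dots> \<le> 2 ^ card T * 2 ^ (card S - (card T + 2))"
  proof -
    have "card (traces - Pow low) \<le> card (Pow T)"
      using traces_subset_Pow finite_V by (intro card_mono) auto
    then show ?thesis using finite_V by (simp add: card_Pow)
  qed
  finally have "4 * (\<Sum>J\<in>traces - Pow low. 2 ^ card (unblocked J))
      \<le> (2::nat) ^ (2 + card T + (card S - (card T + 2)))"
    by (simp add: power_add)
  also have "2 + card T + (card S - (card T + 2)) = card S" using assms by linarith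
  finally show ?thesis .
qed

lemma trace_sum_low_le:
  "(\<Sum>J\<in>traces \<inter> Pow low. 2 ^ card (unblocked J))
    \<le> 2 ^ card S + (2 ^ card low - 1) * (2::nat) ^ (card S - 1)"
proof -
  have fin: "finite (traces \<inter> Pow low)" using finite_traces by blast
  have empty: "{} \<in> traces \<inter> Pow low" using empty_in_traces by blast
  have unblocked_le: "(2::nat) ^ card (unblocked J) \<le> 2 ^ (card S - 1)"
    if J: "J \<in> traces \<inter> Pow low - {{}}" for J
  proof -
    have "finite J" using J traces_subset_Pow finite_V finite_subset by blast
    then have "1 \<le> card J" using J by (simp add: Suc_le_eq card_gt_0_iff)
    then show ?thesis using card_unblocked_add_card_le[of J] J by (intro power_increasing) auto
  qed
  have "(\<Sum>J\<in>traces \<inter> Pow low - {{}}. 2 ^ card (unblocked J))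
      \<le> card (traces \<inter> Pow low - {{}}) * (2::nat) ^ (card S - 1)"
    by (rule order_trans[OF sum_bounded_above[where K = "(2::nat) ^ (card S - 1)"]])
      (use unblocked_le in auto)
  also have "\<dots> \<le> (2 ^ card low - 1) * 2 ^ (card S - 1)"
  proof (intro mult_le_mono1)
    have "finite low" using finite_V by (simp add: low_def)
    then have "card (traces \<inter> Pow low - {{}}) \<le> card (Pow low - {{}})"
      by (intro card_mono) auto
    also have "\<dots> = 2 ^ card low - 1" using \<open>finite low\<close> by (simp add: card_Pow)
    finally show "card (traces \<inter> Pow low - {{}}) \<le> 2 ^ card low - 1" .
  qed
  finally show ?thesis
    using sum.remove[OF fin empty, of "\<lambda>J. (2::nat) ^ card (unblocked J)"]
    by (simp add: nbhd_def)
qed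

lemma trace_sum_lt_if_few_low:
  assumes "min_degree_ge V E d" "d < card T"
    and "card T * (card T + 1) < card S"
  shows "trace_sum < 2 ^ (card V - d)"
proof -
  define P :: nat where "P = 2 ^ (card S - 1)"
  define M :: nat where "M = 2 ^ (card T - d)"
  have "card T + 1 \<le> card T * (card T + 1)"
    using mult_le_mono1[of 1 "card T" "card T + 1"] assms(2) by simp
  then have large_S: "card T + 2 \<le> card S" using assms(3) by linarith
  have S: "2 ^ card S = 2 * P"
    using large_S by (simp add: P_def flip: power_Suc)
  have "card V - d = Suc (card S - 1 + (card T - d))" using card_V assms(2) large_S by linarith
  then have V: "2 ^ (card V - d) = 2 * P * M" by (simp add: P_def M_def power_add)
  have "(2::nat) ^ card low \<le> M"
    unfolding M_def using card_low_le[OF assms(1,3)] by (intro power_increasing) auto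
  moreover have "2 \<le> M" unfolding M_def using assms(2) by (simp add: self_le_power)
  then obtain k where M: "M = k + 2" by (metis add.commute nat_le_iff_add)
  ultimately have "(2 ^ card low - 1) * P \<le> (k + 1) * P" by (intro mult_le_mono1) linarith
  moreover have "(\<Sum>J\<in>traces \<inter> Pow low. 2 ^ card (unblocked J))
      \<le> 2 ^ card S + (2 ^ card low - 1) * P"
    using trace_sum_low_le by (simp add: P_def)
  ultimately have low_part:
    "(\<Sum>J\<in>traces \<inter> Pow low. 2 ^ card (unblocked J)) \<le> 2 * P + (k + 1) * P"
    using S by linarith
  have high_part: "4 * (\<Sum>J\<in>traces - Pow low. 2 ^ card (unblocked J)) \<le> 2 * P"
    using trace_sum_high_le[OF large_S] S by simp
  have "trace_sum = (\<Sum>J\<in>traces \<inter> Pow low. 2 ^ card (unblocked J))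
      + (\<Sum>J\<in>traces - Pow low. 2 ^ card (unblocked J))"
    unfolding trace_sum_def by (rule sum.Int_Diff[OF finite_traces])
  then have "4 * trace_sum \<le> 4 * (2 * P + (k + 1) * P) + 2 * P"
    using low_part high_part by simp
  also have "\<dots> < 4 * (2 * P * M)"
    using M by (simp add: P_def algebra_simps)
  finally show ?thesis using V by (simp add: mult_ac)
qed

lemma num_indep_sets_lt:
  assumes "min_degree_ge V E d" "0 < d" "9 * d ^ 2 + 3 * d + 2 \<le> card V"
    and "\<not> is_complete_bipartite V E d (card V - d)"
  shows "num_indep_sets V E < 2 ^ (card V - d) + 2 ^ d - 1"
proof -
  have "V \<noteq> {}" using assms(3) by auto
  then have "d \<le> card T" using min_degree_le_card_T[OF assms(1)] by simp
  have "trace_sum < 2 ^ (card V - d) + 2 ^ d - 1"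
  proof (cases "card T = d")
    case True
    then show ?thesis using trace_sum_lt_if_card_T_eq[OF assms(1,2)] assms(4) card_V by simp
  next
    case False
    have "trace_sum < 2 ^ (card V - d)"
    proof (cases "3 * d \<le> card T")
      case True
      then show ?thesis using trace_sum_lt_if_card_T_large[OF assms(2)] by simp
    next
      case small: False
      have "card T * (card T + 1) \<le> (3 * d) * (3 * d)" using small by (intro mult_le_mono) auto
      then have "card T * (card T + 1) < card S"
        using small assms(3) card_V by (simp add: power2_eq_square)
      then show ?thesis
        using trace_sum_lt_if_few_low[OF assms(1)] False \<open>d \<le> card T\<close> by simp
    qed
    moreover have "(1::nat) \<le> 2 ^ d" by simp
    ultimately show ?thesis by linarith
  qed
  then show ?thesis using num_indep_sets_le_trace_sum by linarith
qed

end

lemma num_indep_sets_lt_complete_bipartite_bound: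
  assumes "simple_graph V E" "min_degree_ge V E d" "0 < d" "9 * d ^ 2 + 3 * d + 2 \<le> card V"
    and "\<not> is_complete_bipartite V E d (card V - d)"
  shows "num_indep_sets V E < 2 ^ (card V - d) + 2 ^ d - 1"
proof -
  obtain S where "independent_set V E S" "\<And>I. independent_set V E I \<Longrightarrow> card I \<le> card S"
    using maximum_independent_set_exists[OF assms(1)] by blast
  then interpret max_indep_set V E S using assms(1) by unfold_locales
  show ?thesis by (rule num_indep_sets_lt[OF assms(2-5)])
qed

theorem mainTheorem4:
  fixes \<delta> :: nat
  assumes "\<delta> > 0"
  shows "\<exists>N. \<forall>n\<ge>N.
     (\<exists>E. simple_graph {0..<n} E \<and> min_degree_ge {0..<n} E \<delta> \<and>
          is_complete_bipartite {0..<n} E \<delta> (n - \<delta>)) \<and>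
     (\<forall>E H. simple_graph {0..<n} E \<and> min_degree_ge {0..<n} E \<delta> \<and>
            simple_graph {0..<n} H \<and> min_degree_ge {0..<n} H \<delta> \<and>
            is_complete_bipartite {0..<n} H \<delta> (n - \<delta>) \<and>
            \<not> is_complete_bipartite {0..<n} E \<delta> (n - \<delta>)
        \<longrightarrow> num_indep_sets {0..<n} E < num_indep_sets {0..<n} H)"
proof (intro exI[of _ "9 * \<delta> ^ 2 + 3 * \<delta> + 2"] allI impI conjI)
  fix n assume n: "9 * \<delta> ^ 2 + 3 * \<delta> + 2 \<le> n"
  then show "\<exists>E. simple_graph {0..<n} E \<and> min_degree_ge {0..<n} E \<delta> \<and>
          is_complete_bipartite {0..<n} E \<delta> (n - \<delta>)"
    using complete_bipartite_exists[OF assms] by simp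
  fix E H
  assume graphs: "simple_graph {0..<n} E \<and> min_degree_ge {0..<n} E \<delta> \<and>
            simple_graph {0..<n} H \<and> min_degree_ge {0..<n} H \<delta> \<and>
            is_complete_bipartite {0..<n} H \<delta> (n - \<delta>) \<and>
            \<not> is_complete_bipartite {0..<n} E \<delta> (n - \<delta>)"
  have "num_indep_sets {0..<n} E < 2 ^ (n - \<delta>) + 2 ^ \<delta> - 1"
    using num_indep_sets_lt_complete_bipartite_bound[of "{0..<n}" E \<delta>] graphs assms n by simp
  also have "\<dots> \<le> num_indep_sets {0..<n} H"
    using num_indep_sets_complete_bipartite_ge[of "{0..<n}" H \<delta> "n - \<delta>"] graphs by simp
  finally show "num_indep_sets {0..<n} E < num_indep_sets {0..<n} H" .
qed

end
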